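(* If $n>k\ge 3$, then $\mathrm{isat}(n,\mathcal{A}_{k+1})\ge 3n-1$.
   Context: $\mathcal{B}_n$ denotes the Boolean lattice $(2^{[n]},\subseteq)$. A family $\mathcal{F}\subseteq 2^{[n]}$ (ordered by inclusion) is induced-$\mathcal{P}$-saturated if it contains no induced copy of $\mathcal{P}$ (an injection $f$ with $u\le v\iff f(u)\subseteq f(v)$) but every family $\mathcal{F}'$ with $\mathcal{F}\subsetneq\mathcal{F}'\subseteq 2^{[n]}$ contains one. $\mathrm{isat}(n,\mathcal{P})$ is the minimum size of such a family. $\mathcal{A}_{m}$ is the $m$-element antichain. *)

theory Defs
  imports Main
begin

text \<open>The Boolean lattice B_n is the power set of the ground set [n], here {..<n}.
  The m-element antichain A_m is modelled as the poset on {..<m} in which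
  u \<le> v holds iff u = v.\<close>

definition boolean_lattice :: "nat \<Rightarrow> nat set set" where
  "boolean_lattice n = Pow {..<n}"

definition contains_induced_antichain :: "nat \<Rightarrow> nat set set \<Rightarrow> bool" where
  "contains_induced_antichain m F \<longleftrightarrow>
     (\<exists>f. f ` {..<m} \<subseteq> F \<and> inj_on f {..<m} \<and>
          (\<forall>u\<in>{..<m}. \<forall>v\<in>{..<m}. u = v \<longleftrightarrow> f u \<subseteq> f v))"

definition induced_antichain_saturated :: "nat \<Rightarrow> nat \<Rightarrow> nat set set \<Rightarrow> bool" where
  "induced_antichain_saturated n m F \<longleftrightarrow>
     F \<subseteq> boolean_lattice n \<and> \<not> contains_induced_antichain m F \<and>
     (\<forall>F'. F \<subset> F' \<and> F' \<subseteq> boolean_lattice n \<longrightarrow> contains_induced_antichain m F')"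

definition isat_antichain :: "nat \<Rightarrow> nat \<Rightarrow> nat" where
  "isat_antichain n m = Min (card ` {F. induced_antichain_saturated n m F})"

end

theory Submission
  imports Defs
begin

text \<open>
  Let F be an induced-A_(k+1)-saturated family in B_n. By Dilworth's theorem F is covered by k
  chains, and saturation says that every set outside F is incomparable to all members of some
  k-antichain of F, which meets every chain of the cover. So if a chain of the cover has no
  member of size i, then all i-sets between its last member P below level i and its first
  member Q above level i belong to F. Were level i of F of size at most two, one of the k >= 3
  chains would miss it, forcing Q = P + {x, y} and level i = {P + x, P + y}. Moving P + x into
  that chain frees the colour of P + x at level i, and the same argument then puts P (or Q, if P
  is empty) into a second chain, a contradiction. Hence every level 0 < i < n has at least three
  sets, and with the empty set and [n] this gives |F| >= 3(n - 1) + 2.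
\<close>

section \<open>Chain colourings and Dilworth's theorem\<close>

definition antichain :: "'a::order set \<Rightarrow> bool" where
  "antichain A \<longleftrightarrow> (\<forall>x\<in>A. \<forall>y\<in>A. x \<le> y \<longrightarrow> x = y)"

definition chain_colouring :: "nat \<Rightarrow> 'a::order set \<Rightarrow> ('a \<Rightarrow> nat) \<Rightarrow> bool" where
  "chain_colouring k F c \<longleftrightarrow>
     (\<forall>x\<in>F. c x < k) \<and> (\<forall>x\<in>F. \<forall>y\<in>F. c x = c y \<longrightarrow> x \<le> y \<or> y \<le> x)"

lemma antichain_subset: "antichain A \<Longrightarrow> B \<subseteq> A \<Longrightarrow> antichain B"
  unfolding antichain_def by blast

lemma finite_chain_has_greatest:
  fixes M :: "'a::order set"
  assumes "finite M" "M \<noteq> {}" "\<forall>x\<in>M. \<forall>y\<in>M. x \<le> y \<or> y \<le> x"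
  obtains m where "m \<in> M" "\<forall>x\<in>M. x \<le> m"
  using finite_has_maximal[OF assms(1,2)] assms(3) by metis

lemma finite_chain_has_least:
  fixes M :: "'a::order set"
  assumes "finite M" "M \<noteq> {}" "\<forall>x\<in>M. \<forall>y\<in>M. x \<le> y \<or> y \<le> x"
  obtains m where "m \<in> M" "\<forall>x\<in>M. m \<le> x"
  using finite_has_minimal[OF assms(1,2)] assms(3) by metis

lemma antichain_meets_every_colour:
  assumes c: "chain_colouring k F c" and A: "A \<subseteq> F" "antichain A" "card A = k" and t: "t < k"
  obtains y where "y \<in> A" "c y = t"
proof -
  have "inj_on c A"
    using c A(1,2) unfolding chain_colouring_def antichain_def inj_on_def by blast
  then have "card (c ` A) = card {..<k}"
    using A(3) by (simp add: card_image)
  moreover have "c ` A \<subseteq> {..<k}"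
    using c A(1) unfolding chain_colouring_def by auto
  ultimately have "c ` A = {..<k}"
    by (simp add: card_subset_eq)
  then show thesis
    using that t by (metis imageE lessThan_iff)
qed

lemma colour_missing_from_small_set:
  assumes c: "chain_colouring k F c" and L: "L \<subseteq> F" "finite L" "card L < k"
  obtains t where "t < k" "\<forall>x\<in>L. c x \<noteq> t"
proof -
  have "card (c ` L) < card {..<k}"
    using card_image_le[OF L(2), of c] L(3) by simp
  then have "c ` L \<noteq> {..<k}"
    by auto
  moreover have "c ` L \<subseteq> {..<k}"
    using c L(1) unfolding chain_colouring_def by auto
  ultimately obtain t where "t < k" "t \<notin> c ` L"
    by blast
  then show thesis
    using that by blast
qed

lemma chain_colouring_card_eq_imp_eq:
  assumes c: "chain_colouring k F c" and "X \<in> F" "Y \<in> F" "finite X" "finite Y"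
    and "c X = c Y" "card X = card Y"
  shows "X = Y"
proof -
  have "X \<subseteq> Y \<or> Y \<subseteq> X"
    using c assms(2,3,6) unfolding chain_colouring_def by blast
  then show ?thesis
    using assms(4,5,7) by (metis card_subset_eq)
qed

lemma chain_colouring_update:
  assumes c: "chain_colouring k F c" and t: "t < k"
    and comparable: "\<forall>X\<in>F. c X = t \<longrightarrow> X \<le> S \<or> S \<le> X"
  shows "chain_colouring k F (c(S := t))"
  unfolding chain_colouring_def
proof (intro conjI ballI impI)
  fix X assume "X \<in> F"
  then show "(c(S := t)) X < k"
    using c t unfolding chain_colouring_def by simp
next
  fix X Y assume XY: "X \<in> F" "Y \<in> F" "(c(S := t)) X = (c(S := t)) Y"
  consider "X = S" | "Y = S" | "X \<noteq> S" "Y \<noteq> S"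
    by blast
  then show "X \<le> Y \<or> Y \<le> X"
  proof cases
    case 1
    then show ?thesis
      using XY comparable by (cases "Y = S") auto
  next
    case 2
    then show ?thesis
      using XY comparable by (cases "X = S") auto
  next
    case 3
    then show ?thesis
      using XY c unfolding chain_colouring_def by auto
  qed
qed

lemma recoloured_colour_skips_level:
  assumes c: "chain_colouring k F c" and fin: "\<forall>X\<in>F. finite X" and S: "S \<in> F" and "t \<noteq> c S"
  shows "\<forall>X\<in>F. (c(S := t)) X = c S \<longrightarrow> card X \<noteq> card S"
proof (intro ballI impI notI)
  fix X assume X: "X \<in> F" "(c(S := t)) X = c S" "card X = card S"
  then have "X \<noteq> S"
    using \<open>t \<noteq> c S\<close> by auto
  then have "c X = c S"
    using X(2) by simp
  then have "X = S"
    using chain_colouring_card_eq_imp_eq[OF c X(1) S] fin X(1,3) S by blast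
  then show False
    using \<open>X \<noteq> S\<close> by blast
qed

lemma chain_colouring_add_chain:
  assumes "chain_colouring (k - 1) (F - K) d" "\<forall>x\<in>K. \<forall>y\<in>K. x \<le> y \<or> y \<le> x" "0 < k"
  shows "chain_colouring k F (\<lambda>x. if x \<in> K then k - 1 else d x)"
proof -
  have d: "\<forall>x\<in>F - K. d x < k - 1" "\<forall>x\<in>F - K. \<forall>y\<in>F - K. d x = d y \<longrightarrow> x \<le> y \<or> y \<le> x"
    using assms(1) unfolding chain_colouring_def by auto
  show ?thesis
    unfolding chain_colouring_def
  proof (intro conjI ballI impI)
    fix x assume "x \<in> F"
    then show "(if x \<in> K then k - 1 else d x) < k"
      using d(1) \<open>0 < k\<close> by (cases "x \<in> K") force+
  next
    fix x y assume "x \<in> F" "y \<in> F" "(if x \<in> K then k - 1 else d x) = (if y \<in> K then k - 1 else d y)"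
    then show "x \<le> y \<or> y \<le> x"
      using d assms(2) by (auto split: if_splits) (metis DiffI less_irrefl)+
  qed
qed

lemma greatest_elements_of_maximum_antichains:
  fixes F :: "'a::order set"
  assumes "finite F" and c: "chain_colouring k F c"
    and A0: "A0 \<subseteq> F" "antichain A0" "card A0 = k"
  defines "G \<equiv> {x\<in>F. \<exists>A\<subseteq>F. antichain A \<and> card A = k \<and> x \<in> A}"
  obtains peak where "\<forall>t<k. peak t \<in> G \<and> c (peak t) = t"
    and "\<forall>y\<in>G. y \<le> peak (c y)"
    and "\<forall>s<k. \<forall>t<k. peak s \<le> peak t \<longrightarrow> s = t"
proof -
  have "\<exists>m. m \<in> G \<and> c m = t \<and> (\<forall>y\<in>G. c y = t \<longrightarrow> y \<le> m)" if "t < k" for t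
  proof -
    let ?M = "{y\<in>G. c y = t}"
    obtain y where "y \<in> A0" "c y = t"
      using antichain_meets_every_colour[OF c A0 \<open>t < k\<close>] .
    then have "?M \<noteq> {}"
      using A0 unfolding G_def by blast
    moreover have "finite ?M" "\<forall>x\<in>?M. \<forall>y\<in>?M. x \<le> y \<or> y \<le> x"
      using \<open>finite F\<close> c unfolding G_def chain_colouring_def by auto
    ultimately obtain m where "m \<in> ?M" "\<forall>y\<in>?M. y \<le> m"
      using finite_chain_has_greatest[of ?M] by blast
    then show ?thesis
      by blast
  qed
  then obtain peak where peak: "\<And>t. t < k \<Longrightarrow> peak t \<in> G \<and> c (peak t) = t \<and> (\<forall>y\<in>G. c y = t \<longrightarrow> y \<le> peak t)"
    by (metis (no_types))
  have peaks: "\<forall>t<k. peak t \<in> G \<and> c (peak t) = t"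
    using peak by blast
  have injective: "s = t" if st: "s < k" "t < k" "peak s \<le> peak t" for s t
  proof -
    obtain B where B: "B \<subseteq> F" "antichain B" "card B = k" "peak t \<in> B"
      using peak[OF \<open>t < k\<close>] unfolding G_def by blast
    obtain y where y: "y \<in> B" "c y = s"
      using antichain_meets_every_colour[OF c B(1-3) \<open>s < k\<close>] .
    have "y \<in> G"
      using B y(1) unfolding G_def by blast
    then have "y \<le> peak t"
      using peak[OF \<open>s < k\<close>] y(2) st(3) by force
    then have "y = peak t"
      using B(2,4) y(1) unfolding antichain_def by blast
    then show "s = t"
      using y(2) peak[OF \<open>t < k\<close>] by simp
  qed
  have greatest: "y \<le> peak (c y)" if "y \<in> G" for y
  proof -
    have "c y < k"
      using that c unfolding G_def chain_colouring_def by blast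
    then show ?thesis
      using peak that by blast
  qed
  show thesis
    using that peaks greatest injective by blast
qed

lemma maximum_antichain_has_element_below_maximal:
  fixes F :: "'a::order set"
  assumes width: "\<forall>A\<subseteq>F. antichain A \<longrightarrow> card A \<le> k"
    and a: "a \<in> F" "\<forall>x\<in>F. a \<le> x \<longrightarrow> a = x"
    and B: "B \<subseteq> F - {a}" "antichain B" "card B = k" "finite B"
  obtains b where "b \<in> B" "b \<le> a"
proof (rule ccontr)
  assume "\<not> thesis"
  then have none_below: "\<forall>b\<in>B. \<not> b \<le> a"
    using that by blast
  have "antichain (insert a B)"
    unfolding antichain_def
  proof (intro ballI impI)
    fix x y assume "x \<in> insert a B" "y \<in> insert a B" "x \<le> y"
    then show "x = y"
      using a B(1,2) none_below unfolding antichain_def by auto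
  qed
  moreover have "insert a B \<subseteq> F"
    using a(1) B(1) by blast
  ultimately have "card (insert a B) \<le> k"
    using width by blast
  moreover have "a \<notin> B"
    using B(1) by blast
  then have "card (insert a B) = k + 1"
    using B(3,4) by simp
  ultimately show False
    by simp
qed

text \<open>
  The induction step of Galvin's proof of Dilworth's theorem: removing one chain through a
  maximal element lowers the width.
\<close>

lemma chain_through_maximal_lowers_width:
  fixes F :: "'a::order set"
  assumes "finite F" and width: "\<forall>A\<subseteq>F. antichain A \<longrightarrow> card A \<le> k"
    and a: "a \<in> F" "\<forall>x\<in>F. a \<le> x \<longrightarrow> a = x"
    and c: "chain_colouring k (F - {a}) c"
  obtains K where "a \<in> K" "K \<subseteq> F" "\<forall>x\<in>K. \<forall>y\<in>K. x \<le> y \<or> y \<le> x"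
    and "\<forall>A\<subseteq>F - K. antichain A \<longrightarrow> card A < k"
proof (cases "\<exists>A\<subseteq>F - {a}. antichain A \<and> card A = k")
  case False
  have "card A < k" if "A \<subseteq> F - {a}" "antichain A" for A
    using width False that by (metis Diff_subset le_neq_implies_less subset_trans)
  then show thesis
    using that[of "{a}"] a(1) by blast
next
  case True
  then obtain A0 where A0: "A0 \<subseteq> F - {a}" "antichain A0" "card A0 = k"
    by blast
  define G where "G = {x\<in>F - {a}. \<exists>A\<subseteq>F - {a}. antichain A \<and> card A = k \<and> x \<in> A}"
  obtain peak where peak: "\<forall>t<k. peak t \<in> G \<and> c (peak t) = t"
    and greatest: "\<forall>y\<in>G. y \<le> peak (c y)"
    and injective: "\<forall>s<k. \<forall>t<k. peak s \<le> peak t \<longrightarrow> s = t"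
    using greatest_elements_of_maximum_antichains[of "F - {a}" k c A0] \<open>finite F\<close> c A0
    unfolding G_def by blast
  have "peak ` {..<k} \<subseteq> F - {a}"
    using peak unfolding G_def by auto
  moreover have "antichain (peak ` {..<k})"
    using injective unfolding antichain_def by auto
  moreover have "card (peak ` {..<k}) = k"
    using injective by (simp add: card_image inj_on_def)
  ultimately obtain t0 where t0: "t0 < k" "peak t0 \<le> a"
    using maximum_antichain_has_element_below_maximal[OF width a] by blast
  define K where "K = insert a {z\<in>F - {a}. c z = t0 \<and> z \<le> peak t0}"
  have below_a: "z \<le> a" if "z \<in> K" for z
  proof -
    have "z = a \<or> z \<le> peak t0"
      using that unfolding K_def by blast
    then show ?thesis
      using t0(2) by (elim disjE) (simp_all add: order_trans[OF _ t0(2)])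
  qed
  have "x \<le> y \<or> y \<le> x" if "x \<in> K" "y \<in> K" for x y
  proof (cases "x = a \<or> y = a")
    case True
    then show ?thesis
      using below_a that by blast
  next
    case False
    then have "x \<in> F - {a}" "y \<in> F - {a}" "c x = c y"
      using that unfolding K_def by auto
    then show ?thesis
      using c unfolding chain_colouring_def by blast
  qed
  moreover have "card A < k" if A: "A \<subseteq> F - K" "antichain A" for A
  proof -
    have A_sub: "A \<subseteq> F - {a}"
      using A(1) unfolding K_def by blast
    have "card A \<noteq> k"
    proof
      assume "card A = k"
      then obtain y where y: "y \<in> A" "c y = t0"
        using antichain_meets_every_colour[OF c A_sub A(2) _ t0(1)] by blast
      have "y \<in> G"
        using y(1) A_sub A(2) \<open>card A = k\<close> unfolding G_def by blast
      then have "y \<le> peak t0"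
        using greatest y(2) by force
      then have "y \<in> K"
        using y A_sub unfolding K_def by blast
      then show False
        using y(1) A(1) by blast
    qed
    moreover have "card A \<le> k"
      using width A by blast
    ultimately show ?thesis
      by simp
  qed
  moreover have "a \<in> K" "K \<subseteq> F"
    using a(1) unfolding K_def by auto
  ultimately show thesis
    using that by blast
qed

theorem dilworth:
  fixes F :: "'a::order set"
  assumes "finite F" "\<forall>A\<subseteq>F. antichain A \<longrightarrow> card A \<le> k"
  shows "\<exists>c. chain_colouring k F c"
  using assms
proof (induction "card F" arbitrary: F k rule: less_induct)
  case less
  show ?case
  proof (cases "F = {}")
    case True
    then show ?thesis
      unfolding chain_colouring_def by simp
  next
    case False
    then obtain a where a: "a \<in> F" "\<forall>x\<in>F. a \<le> x \<longrightarrow> a = x"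
      using finite_has_maximal[OF less.prems(1)] by blast
    have "antichain {a}" "{a} \<subseteq> F"
      using a(1) unfolding antichain_def by auto
    then have "card {a} \<le> k"
      using less.prems(2) by blast
    then have "0 < k"
      by simp
    have "\<forall>A\<subseteq>F - {a}. antichain A \<longrightarrow> card A \<le> k"
      using less.prems(2) by blast
    then have "\<exists>c. chain_colouring k (F - {a}) c"
      by (rule less.hyps[OF card_Diff1_less[OF less.prems(1) a(1)] finite_Diff[OF less.prems(1)]])
    then obtain c where "chain_colouring k (F - {a}) c" ..
    then obtain K where K: "a \<in> K" "K \<subseteq> F" "\<forall>x\<in>K. \<forall>y\<in>K. x \<le> y \<or> y \<le> x"
      "\<forall>A\<subseteq>F - K. antichain A \<longrightarrow> card A < k"
      using chain_through_maximal_lowers_width[OF less.prems a] by blast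
    have "F - K \<subset> F"
      using K(1) a(1) by blast
    then have smaller: "card (F - K) < card F"
      using less.prems(1) by (simp add: psubset_card_mono)
    have finite: "finite (F - K)"
      using less.prems(1) by simp
    have narrower: "\<forall>A\<subseteq>F - K. antichain A \<longrightarrow> card A \<le> k - 1"
    proof (intro allI impI)
      fix A assume "A \<subseteq> F - K" "antichain A"
      then have "card A < k"
        using K(4) by blast
      then show "card A \<le> k - 1"
        by linarith
    qed
    obtain d where "chain_colouring (k - 1) (F - K) d"
      using less.hyps[OF smaller finite narrower] ..
    then have "chain_colouring k F (\<lambda>x. if x \<in> K then k - 1 else d x)"
      using K(3) \<open>0 < k\<close> by (rule chain_colouring_add_chain)
    then show ?thesis
      by (rule exI[where P = "chain_colouring k F"])
  qed
qed

section \<open>Saturated families\<close>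

text \<open>
  Adding S to F creates a (k+1)-antichain containing S exactly when S completes a
  k-antichain of F.
\<close>

definition completes_antichain :: "nat \<Rightarrow> 'a::order set \<Rightarrow> 'a \<Rightarrow> bool" where
  "completes_antichain k F S \<longleftrightarrow> (\<exists>A\<subseteq>F. antichain A \<and> card A = k \<and> (\<forall>a\<in>A. \<not> a \<le> S \<and> \<not> S \<le> a))"

lemma completes_antichain_has_incomparable:
  assumes "completes_antichain k F S" "0 < k"
  shows "\<exists>a\<in>F. \<not> a \<le> S \<and> \<not> S \<le> a"
proof -
  obtain A where A: "A \<subseteq> F" "card A = k" "\<forall>a\<in>A. \<not> a \<le> S \<and> \<not> S \<le> a"
    using assms(1) unfolding completes_antichain_def by blast
  then have "A \<noteq> {}"
    using assms(2) by auto
  then show ?thesis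
    using A(1,3) by blast
qed

lemma not_completes_antichain_if_colour_comparable:
  assumes c: "chain_colouring k F c" and t: "t < k"
    and comparable: "\<forall>X\<in>F. c X = t \<longrightarrow> X \<le> S \<or> S \<le> X"
  shows "\<not> completes_antichain k F S"
proof
  assume "completes_antichain k F S"
  then obtain A where A: "A \<subseteq> F" "antichain A" "card A = k" "\<forall>a\<in>A. \<not> a \<le> S \<and> \<not> S \<le> a"
    unfolding completes_antichain_def by blast
  obtain y where "y \<in> A" "c y = t"
    using antichain_meets_every_colour[OF c A(1-3) t] .
  then show False
    using A(1,4) comparable by blast
qed

lemma contains_induced_antichain_iff:
  "contains_induced_antichain m F \<longleftrightarrow> (\<exists>A\<subseteq>F. antichain A \<and> card A = m)"
proof
  assume "contains_induced_antichain m F"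
  then obtain f where f: "f ` {..<m} \<subseteq> F" "inj_on f {..<m}"
    and order: "\<forall>u\<in>{..<m}. \<forall>v\<in>{..<m}. u = v \<longleftrightarrow> f u \<subseteq> f v"
    unfolding contains_induced_antichain_def by blast
  have "antichain (f ` {..<m})"
    unfolding antichain_def
  proof (intro ballI impI)
    fix x y assume "x \<in> f ` {..<m}" "y \<in> f ` {..<m}" "x \<subseteq> y"
    then obtain u v where uv: "u \<in> {..<m}" "v \<in> {..<m}" "x = f u" "y = f v" "f u \<subseteq> f v"
      by auto
    then have "u = v"
      using order by blast
    then show "x = y"
      using \<open>x = f u\<close> \<open>y = f v\<close> by simp
  qed
  moreover have "card (f ` {..<m}) = m"
    using f(2) by (simp add: card_image)
  ultimately show "\<exists>A\<subseteq>F. antichain A \<and> card A = m"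
    using f(1) by blast
next
  assume "\<exists>A\<subseteq>F. antichain A \<and> card A = m"
  then obtain A where A: "A \<subseteq> F" "antichain A" "card A = m"
    by blast
  show "contains_induced_antichain m F"
  proof (cases "finite A")
    case True
    then obtain f where "bij_betw f {..<m} A"
      using ex_bij_betw_nat_finite[of A] A(3) by (auto simp: atLeast0LessThan)
    then have f: "f ` {..<m} = A" "inj_on f {..<m}"
      by (simp_all add: bij_betw_def)
    have "\<forall>u\<in>{..<m}. \<forall>v\<in>{..<m}. u = v \<longleftrightarrow> f u \<subseteq> f v"
    proof (intro ballI iffI)
      fix u v :: nat assume "u = v"
      then show "f u \<subseteq> f v"
        by simp
    next
      fix u v assume uv: "u \<in> {..<m}" "v \<in> {..<m}" "f u \<subseteq> f v"
      have "f u \<in> A" "f v \<in> A"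
        using f(1) uv(1,2) by auto
      then have "f u = f v"
        using A(2) uv(3) unfolding antichain_def by blast
      then show "u = v"
        using f(2) uv(1,2) by (simp add: inj_on_eq_iff)
    qed
    then show ?thesis
      unfolding contains_induced_antichain_def using f A(1) by auto
  next
    case False
    then have "m = 0"
      using A(3) by simp
    then show ?thesis
      unfolding contains_induced_antichain_def by simp
  qed
qed

lemma induced_antichain_saturatedD:
  assumes "induced_antichain_saturated n (k + 1) F"
  shows "F \<subseteq> Pow {..<n}"
    and "\<forall>A\<subseteq>F. antichain A \<longrightarrow> card A \<le> k"
    and "\<forall>S\<subseteq>{..<n}. S \<notin> F \<longrightarrow> completes_antichain k F S"
proof -
  have F: "F \<subseteq> boolean_lattice n"
    and free: "\<And>A. A \<subseteq> F \<Longrightarrow> antichain A \<Longrightarrow> card A \<noteq> k + 1"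
    and maximal: "\<And>F'. F \<subset> F' \<Longrightarrow> F' \<subseteq> boolean_lattice n \<Longrightarrow> \<exists>A\<subseteq>F'. antichain A \<and> card A = k + 1"
    using assms unfolding induced_antichain_saturated_def contains_induced_antichain_iff
    by blast+
  show "F \<subseteq> Pow {..<n}"
    using F unfolding boolean_lattice_def .
  show "\<forall>A\<subseteq>F. antichain A \<longrightarrow> card A \<le> k"
  proof (intro allI impI)
    fix A assume A: "A \<subseteq> F" "antichain A"
    show "card A \<le> k"
    proof (rule ccontr)
      assume "\<not> card A \<le> k"
      then obtain B where B: "B \<subseteq> A" "card B = k + 1"
        using obtain_subset_with_card_n[of "k + 1" A] by auto
      have "antichain B"
        using A(2) B(1) by (rule antichain_subset)
      moreover have "B \<subseteq> F"
        using A(1) B(1) by blast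
      ultimately show False
        using free B(2) by blast
    qed
  qed
  show "\<forall>S\<subseteq>{..<n}. S \<notin> F \<longrightarrow> completes_antichain k F S"
  proof (intro allI impI)
    fix S assume S: "S \<subseteq> {..<n}" "S \<notin> F"
    then have "F \<subset> insert S F" "insert S F \<subseteq> boolean_lattice n"
      using F unfolding boolean_lattice_def by auto
    then have "\<exists>A\<subseteq>insert S F. antichain A \<and> card A = k + 1"
      by (rule maximal)
    then obtain A where A: "A \<subseteq> insert S F" "antichain A" "card A = k + 1"
      by blast
    have "S \<in> A"
    proof (rule ccontr)
      assume "S \<notin> A"
      then have "A \<subseteq> F"
        using A(1) by blast
      then show False
        using free A(2,3) by blast
    qed
    have "finite A"
      using A(3) by (simp add: card_ge_0_finite)
    then have "A - {S} \<subseteq> F" "card (A - {S}) = k"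
      using A(1,3) \<open>S \<in> A\<close> by auto
    moreover have "antichain (A - {S})"
      using A(2) by (rule antichain_subset) blast
    moreover have "\<forall>a\<in>A - {S}. \<not> a \<subseteq> S \<and> \<not> S \<subseteq> a"
      using A(2) \<open>S \<in> A\<close> unfolding antichain_def by blast
    ultimately show "completes_antichain k F S"
      unfolding completes_antichain_def by blast
  qed
qed

lemma induced_antichain_saturated_exists:
  assumes "0 < m"
  shows "\<exists>F. induced_antichain_saturated n m F"
proof -
  define Free where "Free = {F. F \<subseteq> boolean_lattice n \<and> \<not> contains_induced_antichain m F}"
  have "finite Free"
    unfolding Free_def boolean_lattice_def by (rule finite_subset[of _ "Pow (Pow {..<n})"]) auto
  moreover have "{} \<in> Free"
    using assms unfolding Free_def contains_induced_antichain_iff by auto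
  ultimately obtain F where F: "F \<in> Free" and maximal: "\<forall>F'\<in>Free. F \<subseteq> F' \<longrightarrow> F = F'"
    using finite_has_maximal[of Free] by blast
  have "induced_antichain_saturated n m F"
    unfolding induced_antichain_saturated_def
  proof (intro conjI allI impI)
    show "F \<subseteq> boolean_lattice n" "\<not> contains_induced_antichain m F"
      using F unfolding Free_def by auto
  next
    fix F' assume "F \<subset> F' \<and> F' \<subseteq> boolean_lattice n"
    then show "contains_induced_antichain m F'"
      using maximal unfolding Free_def by blast
  qed
  then show ?thesis ..
qed

section \<open>Levels of a saturated family\<close>

definition level :: "'a set set \<Rightarrow> nat \<Rightarrow> 'a set set" where
  "level F i = {X\<in>F. card X = i}"

lemma self_le_binomial: "0 < m \<Longrightarrow> m < d \<Longrightarrow> d \<le> d choose m"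
proof (induction d arbitrary: m)
  case 0
  then show ?case
    by simp
next
  case (Suc d)
  show ?case
  proof (cases "m = 1")
    case True
    then show ?thesis
      by simp
  next
    case False
    then obtain m' where m': "m = Suc m'" "0 < m'" "m' < d"
      using Suc.prems by (cases m) auto
    then have "d \<le> d choose m'"
      using Suc.IH by blast
    moreover have "0 < d choose Suc m'"
      using m' by simp
    ultimately have "Suc d \<le> (d choose m') + (d choose Suc m')"
      by linarith
    then show ?thesis
      using m'(1) by simp
  qed
qed

lemma card_interval_level:
  assumes "finite Q" "P \<subseteq> Q" "card P \<le> i"
  shows "card {S. P \<subseteq> S \<and> S \<subseteq> Q \<and> card S = i} = card (Q - P) choose (i - card P)"
proof -
  have fin_P: "finite P"
    using assms(1,2) by (rule finite_subset[rotated])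
  have "bij_betw (\<lambda>S. S - P) {S. P \<subseteq> S \<and> S \<subseteq> Q \<and> card S = i} {B. B \<subseteq> Q - P \<and> card B = i - card P}"
  proof (rule bij_betw_byWitness[where f' = "\<lambda>B. P \<union> B"])
    show "(\<lambda>S. S - P) ` {S. P \<subseteq> S \<and> S \<subseteq> Q \<and> card S = i} \<subseteq> {B. B \<subseteq> Q - P \<and> card B = i - card P}"
      using fin_P by (auto simp: card_Diff_subset)
    show "(\<lambda>B. P \<union> B) ` {B. B \<subseteq> Q - P \<and> card B = i - card P} \<subseteq> {S. P \<subseteq> S \<and> S \<subseteq> Q \<and> card S = i}"
    proof clarify
      fix B assume B: "B \<subseteq> Q - P" "card B = i - card P"
      then have "finite B"
        using assms(1) by (meson finite_Diff finite_subset)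
      then have "card (P \<union> B) = card P + card B"
        using fin_P B(1) by (subst card_Un_disjoint) auto
      then show "P \<subseteq> P \<union> B \<and> P \<union> B \<subseteq> Q \<and> card (P \<union> B) = i"
        using B assms(2,3) by auto
    qed
  qed auto
  then show ?thesis
    using n_subsets[of "Q - P" "i - card P"] assms(1) by (simp add: bij_betw_same_card)
qed

lemma chain_skipping_level_gap:
  fixes C :: "'a set set"
  assumes U: "finite U" "C \<subseteq> Pow U" and chain: "\<forall>X\<in>C. \<forall>Y\<in>C. X \<subseteq> Y \<or> Y \<subseteq> X"
    and skip: "\<forall>X\<in>C. card X \<noteq> i" and i: "0 < i" "i < card U"
  obtains P Q where "P \<subseteq> Q" "Q \<subseteq> U" "card P < i" "i < card Q"
    and "\<forall>X\<in>C. X \<subseteq> P \<or> Q \<subseteq> X" and "P = {} \<or> P \<in> C" and "Q = U \<or> Q \<in> C"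
proof -
  define Lo where "Lo = {X\<in>C. card X < i}"
  define Hi where "Hi = {X\<in>C. i < card X}"
  have "finite C"
    using U by (simp add: finite_subset)
  then have fin: "finite Lo" "finite Hi"
    unfolding Lo_def Hi_def by simp_all
  have chains: "\<forall>X\<in>Lo. \<forall>Y\<in>Lo. X \<subseteq> Y \<or> Y \<subseteq> X" "\<forall>X\<in>Hi. \<forall>Y\<in>Hi. X \<subseteq> Y \<or> Y \<subseteq> X"
    using chain unfolding Lo_def Hi_def by auto
  obtain P where P: "P = {} \<or> P \<in> Lo" "\<forall>X\<in>Lo. X \<subseteq> P"
  proof (cases "Lo = {}")
    case True
    then show thesis
      using that[of "{}"] by blast
  next
    case False
    obtain m where "m \<in> Lo" "\<forall>X\<in>Lo. X \<subseteq> m"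
      by (rule finite_chain_has_greatest[OF fin(1) False chains(1)])
    then show thesis
      using that by blast
  qed
  obtain Q where Q: "Q = U \<or> Q \<in> Hi" "\<forall>X\<in>Hi. Q \<subseteq> X"
  proof (cases "Hi = {}")
    case True
    then show thesis
      using that[of U] by blast
  next
    case False
    obtain m where "m \<in> Hi" "\<forall>X\<in>Hi. m \<subseteq> X"
      by (rule finite_chain_has_least[OF fin(2) False chains(2)])
    then show thesis
      using that by blast
  qed
  have card_P: "card P < i"
    using P(1) i(1) unfolding Lo_def by auto
  have card_Q: "i < card Q"
    using Q(1) i(2) unfolding Hi_def by auto
  have "X \<subseteq> P \<or> Q \<subseteq> X" if "X \<in> C" for X
  proof -
    have "X \<in> Lo \<or> X \<in> Hi"
      using that skip unfolding Lo_def Hi_def by fastforce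
    then show ?thesis
      using P(2) Q(2) by blast
  qed
  moreover have "Q \<subseteq> U"
    using Q(1) U(2) unfolding Hi_def by auto
  moreover have "P \<subseteq> Q"
  proof (cases "P = {} \<or> Q = U")
    case True
    then show ?thesis
      using P(1) U(2) unfolding Lo_def by auto
  next
    case False
    then have "P \<in> C" "Q \<in> C"
      using P(1) Q(1) unfolding Lo_def Hi_def by auto
    moreover have "\<not> Q \<subseteq> P"
      using card_mono[of P Q] \<open>P \<in> C\<close> U card_P card_Q by (auto intro: finite_subset)
    ultimately show ?thesis
      using chain by blast
  qed
  moreover have "P = {} \<or> P \<in> C" "Q = U \<or> Q \<in> C"
    using P(1) Q(1) unfolding Lo_def Hi_def by auto
  ultimately show thesis
    using that card_P card_Q by blast
qed

lemma sets_between_colour_gap_in_family: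
  assumes c: "chain_colouring k F c" and t: "t < k"
    and sat: "\<forall>S\<subseteq>U. S \<notin> F \<longrightarrow> completes_antichain k F S"
    and cover: "\<forall>X\<in>F. c X = t \<longrightarrow> X \<subseteq> P \<or> Q \<subseteq> X"
    and "Q \<subseteq> U" "P \<subseteq> S" "S \<subseteq> Q"
  shows "S \<in> F"
proof (rule ccontr)
  assume "S \<notin> F"
  then have "completes_antichain k F S"
    using sat assms(5,7) by blast
  moreover have "\<forall>X\<in>F. c X = t \<longrightarrow> X \<subseteq> S \<or> S \<subseteq> X"
    using cover assms(6,7) by blast
  ultimately show False
    using not_completes_antichain_if_colour_comparable[OF c t] by blast
qed

lemma small_level_around_colour_gap:
  assumes U: "finite U" "3 \<le> card U" and F: "F \<subseteq> Pow U" and c: "chain_colouring k F c"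
    and sat: "\<forall>S\<subseteq>U. S \<notin> F \<longrightarrow> completes_antichain k F S"
    and t: "t < k" and skip: "\<forall>X\<in>F. c X = t \<longrightarrow> card X \<noteq> i" and i: "0 < i" "i < card U"
    and small: "card (level F i) \<le> 2"
  obtains S1 S2 where "level F i = {S1, S2}" "S1 \<noteq> S2"
    and "card (\<Inter>(level F i)) + 1 = i" "card (\<Union>(level F i)) = i + 1"
    and "\<forall>X\<in>F. c X = t \<longrightarrow> X \<subseteq> \<Inter>(level F i) \<or> \<Union>(level F i) \<subseteq> X"
    and "\<Inter>(level F i) \<noteq> {} \<longrightarrow> \<Inter>(level F i) \<in> F \<and> c (\<Inter>(level F i)) = t"
    and "\<Inter>(level F i) = {} \<longrightarrow> \<Union>(level F i) \<in> F \<and> c (\<Union>(level F i)) = t"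
proof -
  let ?C = "{X\<in>F. c X = t}"
  have "?C \<subseteq> Pow U" "\<forall>X\<in>?C. \<forall>Y\<in>?C. X \<subseteq> Y \<or> Y \<subseteq> X" "\<forall>X\<in>?C. card X \<noteq> i"
    using F c skip unfolding chain_colouring_def by auto
  then obtain P Q where PQ: "P \<subseteq> Q" "Q \<subseteq> U" "card P < i" "i < card Q"
    and cover_C: "\<forall>X\<in>?C. X \<subseteq> P \<or> Q \<subseteq> X" and ends: "P = {} \<or> P \<in> ?C" "Q = U \<or> Q \<in> ?C"
    by (rule chain_skipping_level_gap[OF U(1) _ _ _ i])
  have cover: "\<forall>X\<in>F. c X = t \<longrightarrow> X \<subseteq> P \<or> Q \<subseteq> X"
    using cover_C by blast
  let ?I = "{S. P \<subseteq> S \<and> S \<subseteq> Q \<and> card S = i}"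
  have fin: "finite Q" "finite P" "finite (level F i)"
    using PQ(1,2) U(1) F by (auto intro: finite_subset simp: level_def)
  have I_level: "?I \<subseteq> level F i"
    using sets_between_colour_gap_in_family[OF c t sat cover PQ(2)] unfolding level_def by blast
  have "card (Q - P) \<le> card (Q - P) choose (i - card P)"
    using PQ(3,4) card_Diff_subset[OF fin(2) PQ(1)] by (intro self_le_binomial) auto
  also have "\<dots> = card ?I"
    using card_interval_level[OF fin(1) PQ(1)] PQ(3) by simp
  also have "\<dots> \<le> 2"
    using card_mono[OF fin(3) I_level] small by linarith
  finally have "card (Q - P) \<le> 2" .
  moreover have card_QP: "card (Q - P) = card Q - card P"
    using card_Diff_subset[OF fin(2) PQ(1)] .
  ultimately have "card (Q - P) = 2" and i_eq: "i = card P + 1"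
    using PQ(3,4) by linarith+
  then obtain x y where xy: "Q - P = {x, y}" "x \<noteq> y"
    by (auto simp: card_2_iff)
  define S1 where "S1 = insert x P"
  define S2 where "S2 = insert y P"
  have xy_notin: "x \<notin> P" "y \<notin> P"
    using xy(1) by auto
  have "S1 \<in> ?I" "S2 \<in> ?I"
    using xy xy_notin PQ(1) fin(2) i_eq unfolding S1_def S2_def by auto
  then have "{S1, S2} \<subseteq> level F i" "S1 \<noteq> S2"
    using I_level xy xy_notin unfolding S1_def S2_def by auto
  then have level_eq: "level F i = {S1, S2}"
    using card_seteq[OF fin(3)] small by (metis card_2_iff)
  have P_eq: "\<Inter>(level F i) = P" and Q_eq: "\<Union>(level F i) = Q"
    using xy xy_notin PQ(1) unfolding level_eq S1_def S2_def by auto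
  have card_Q: "card Q = i + 1"
    using \<open>card (Q - P) = 2\<close> card_QP i_eq by linarith
  have "Q \<noteq> U" if "P = {}"
    using card_Q i_eq that U(2) by auto
  then have "P = {} \<longrightarrow> Q \<in> ?C"
    using ends(2) by blast
  then show thesis
    using that[OF level_eq \<open>S1 \<noteq> S2\<close>] i_eq card_Q cover ends(1) unfolding P_eq Q_eq by auto
qed

lemma level_card_ge_3:
  assumes U: "finite U" "3 \<le> card U" and F: "F \<subseteq> Pow U"
    and width: "\<forall>A\<subseteq>F. antichain A \<longrightarrow> card A \<le> k"
    and sat: "\<forall>S\<subseteq>U. S \<notin> F \<longrightarrow> completes_antichain k F S"
    and k: "3 \<le> k" and i: "0 < i" "i < card U"
  shows "3 \<le> card (level F i)"
proof (rule ccontr)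
  assume "\<not> 3 \<le> card (level F i)"
  then have small: "card (level F i) \<le> 2"
    by simp
  have "finite F"
    using U(1) F by (simp add: finite_subset)
  then obtain c where c: "chain_colouring k F c"
    using dilworth[OF _ width] by blast
  have "level F i \<subseteq> F" "finite (level F i)" "card (level F i) < k"
    using \<open>finite F\<close> small k unfolding level_def by auto
  then obtain t where t: "t < k" "\<forall>X\<in>level F i. c X \<noteq> t"
    by (rule colour_missing_from_small_set[OF c])
  then have skip: "\<forall>X\<in>F. c X = t \<longrightarrow> card X \<noteq> i"
    unfolding level_def by blast
  let ?P = "\<Inter>(level F i)" and ?Q = "\<Union>(level F i)"
  obtain S1 S2 where level_eq: "level F i = {S1, S2}" and "S1 \<noteq> S2"
    and cards: "card ?P + 1 = i" "card ?Q = i + 1"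
    and cover: "\<forall>X\<in>F. c X = t \<longrightarrow> X \<subseteq> ?P \<or> ?Q \<subseteq> X"
    and ends: "?P \<noteq> {} \<longrightarrow> ?P \<in> F \<and> c ?P = t" "?P = {} \<longrightarrow> ?Q \<in> F \<and> c ?Q = t"
    by (rule small_level_around_colour_gap[OF U F c sat t(1) skip i small])
  have S1: "S1 \<in> F" "card S1 = i"
    using level_eq unfolding level_def by auto
  define t1 where "t1 = c S1"
  define c' where "c' = c(S1 := t)"
  have "t1 \<noteq> t"
    using t(2) level_eq unfolding t1_def by auto
  have "t1 < k"
    using c S1(1) unfolding t1_def chain_colouring_def by blast
  have "?P \<subseteq> S1" "S1 \<subseteq> ?Q"
    using level_eq by auto
  then have "\<forall>X\<in>F. c X = t \<longrightarrow> X \<subseteq> S1 \<or> S1 \<subseteq> X"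
    using cover by blast
  then have c': "chain_colouring k F c'"
    unfolding c'_def by (rule chain_colouring_update[OF c t(1)])
  have fin: "\<forall>X\<in>F. finite X"
    using F U(1) by (auto intro: finite_subset)
  have "t \<noteq> c S1"
    using \<open>t1 \<noteq> t\<close> unfolding t1_def by simp
  then have skip': "\<forall>X\<in>F. c' X = t1 \<longrightarrow> card X \<noteq> i"
    using recoloured_colour_skips_level[OF c fin S1(1)] S1(2) unfolding c'_def t1_def by simp
  obtain T1 T2 where "level F i = {T1, T2}" "T1 \<noteq> T2"
    and "card ?P + 1 = i" "card ?Q = i + 1"
    and "\<forall>X\<in>F. c' X = t1 \<longrightarrow> X \<subseteq> ?P \<or> ?Q \<subseteq> X"
    and ends': "?P \<noteq> {} \<longrightarrow> ?P \<in> F \<and> c' ?P = t1" "?P = {} \<longrightarrow> ?Q \<in> F \<and> c' ?Q = t1"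
    by (rule small_level_around_colour_gap[OF U F c' sat \<open>t1 < k\<close> skip' i small])
  have "\<exists>E\<in>F. E \<noteq> S1 \<and> c E = t \<and> c' E = t1"
  proof (cases "?P = {}")
    case True
    then have "?Q \<in> F" "c ?Q = t" "c' ?Q = t1"
      using ends(2) ends'(2) by simp_all
    moreover have "?Q \<noteq> S1"
      using cards(2) S1(2) by auto
    ultimately show ?thesis
      by blast
  next
    case False
    then have "?P \<in> F" "c ?P = t" "c' ?P = t1"
      using ends(1) ends'(1) by simp_all
    moreover have "?P \<noteq> S1"
      using cards(1) S1(2) by auto
    ultimately show ?thesis
      by blast
  qed
  then show False
    using \<open>t1 \<noteq> t\<close> unfolding c'_def by auto
qed

lemma card_eq_sum_levels:
  assumes "F \<subseteq> Pow {..<n}"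
  shows "card F = (\<Sum>i\<le>n. card (level F i))"
proof -
  have "F = (\<Union>i\<le>n. level F i)"
  proof
    show "F \<subseteq> (\<Union>i\<le>n. level F i)"
    proof
      fix X assume "X \<in> F"
      moreover have "card X \<le> n"
        using \<open>X \<in> F\<close> assms card_mono[of "{..<n}" X] by auto
      ultimately show "X \<in> (\<Union>i\<le>n. level F i)"
        unfolding level_def by blast
    qed
  qed (auto simp: level_def)
  moreover have "finite F"
    using assms by (rule finite_subset) simp
  then have "card (\<Union>i\<le>n. level F i) = (\<Sum>i\<le>n. card (level F i))"
    by (intro card_UN_disjoint) (auto simp: level_def)
  ultimately show ?thesis
    by simp
qed

lemma saturated_family_card_ge:
  assumes sat: "induced_antichain_saturated n (k + 1) F" and k: "3 \<le> k" and "k < n"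
  shows "3 * n - 1 \<le> card F"
proof -
  have n: "3 \<le> n"
    using assms by simp
  note F = induced_antichain_saturatedD[OF sat]
  have "\<not> completes_antichain k F S" if "\<forall>X\<in>F. X \<subseteq> S \<or> S \<subseteq> X" for S
    using completes_antichain_has_incomparable that k by fastforce
  then have "{} \<in> F" "{..<n} \<in> F"
    using F(1,3) by blast+
  then have ends: "1 \<le> card (level F 0)" "1 \<le> card (level F n)"
    using F(1) by (auto simp: level_def card_gt_0_iff Suc_le_eq intro: finite_subset)
  have middle: "3 * (n - 1) \<le> (\<Sum>i\<in>{1..<n}. card (level F i))"
  proof -
    have "(\<Sum>i\<in>{1..<n}. 3) \<le> (\<Sum>i\<in>{1..<n}. card (level F i))"
      using level_card_ge_3[of "{..<n}" F k] F k n by (intro sum_mono) auto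
    then show ?thesis
      by simp
  qed
  have "{..n} = insert 0 (insert n {1..<n})"
    using n by auto
  then have "card F = card (level F 0) + card (level F n) + (\<Sum>i\<in>{1..<n}. card (level F i))"
    using card_eq_sum_levels[OF F(1)] n by simp
  then show ?thesis
    using ends middle by linarith
qed

theorem proposition3p2:
  fixes n k :: nat
  assumes "n > k" and "k \<ge> 3"
  shows "isat_antichain n (k + 1) \<ge> 3 * n - 1"
proof -
  let ?Sat = "{F. induced_antichain_saturated n (k + 1) F}"
  have "?Sat \<subseteq> Pow (boolean_lattice n)"
    unfolding induced_antichain_saturated_def by blast
  then have "finite ?Sat"
    unfolding boolean_lattice_def by (rule finite_subset) simp
  moreover have "?Sat \<noteq> {}"
    using induced_antichain_saturated_exists[of "k + 1" n] by simp
  ultimately have "isat_antichain n (k + 1) \<in> card ` ?Sat"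
    unfolding isat_antichain_def by (intro Min_in) auto
  then show ?thesis
    using saturated_family_card_ge assms by auto
qed

end
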